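(* Let $\alpha>0$ and $\varphi\in BMO$. If $\widetilde{|\varphi|}_t\in C_0(\mathbb{C})$ for every $t>0$, then $T_\varphi$ is compact on $F^\infty_\alpha$.
   Context: $BMO$ denotes the space of locally integrable functions $\varphi$ on $\mathbb{C}$ with $\sup_{z}\frac{1}{|B(z,r)|}\int_{B(z,r)}|\varphi(w)-\hat\varphi_r(z)|\,dA(w)<\infty$, $\hat\varphi_r(z)$ the average of $\varphi$ over $B(z,r)$ (independent of $r>0$). $d\lambda_\alpha(w)=\frac{\alpha}{\pi}e^{-\alpha|w|^2}dA(w)$, $K_z(w)=e^{\alpha\bar z w}$. $F^\infty_\alpha$ is the space of entire $f$ with $\|f\|_{\infty,\alpha}=\sup_z|f(z)|e^{-\alpha|z|^2/2}<\infty$. $T_\varphi f(z)=\int_{\mathbb{C}}\varphi(w)f(w)\overline{K_z(w)}\,d\lambda_\alpha(w)$. For $t>0$, $\widetilde{|\varphi|}_t(z)=\frac{\alpha}{\pi}\int_{\mathbb{C}}|\varphi(w)|e^{-\alpha t|z-w|^2/2}\,dA(w)$. $C_0(\mathbb{C})$ is the space of continuous functions vanishing at infinity. *)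

theory Defs
  imports "HOL-Analysis.Analysis"
begin

definition locally_integrable :: "(complex \<Rightarrow> complex) \<Rightarrow> bool" where
  "locally_integrable \<phi> \<longleftrightarrow> (\<forall>K. compact K \<longrightarrow> set_integrable lborel K \<phi>)"

definition ball_avg :: "(complex \<Rightarrow> complex) \<Rightarrow> real \<Rightarrow> complex \<Rightarrow> complex" where
  "ball_avg \<phi> r z = (LINT w:ball z r|lborel. \<phi> w) / complex_of_real (pi * r\<^sup>2)"

definition mean_osc :: "(complex \<Rightarrow> complex) \<Rightarrow> real \<Rightarrow> complex \<Rightarrow> real" where
  "mean_osc \<phi> r z = (LINT w:ball z r|lborel. cmod (\<phi> w - ball_avg \<phi> r z)) / (pi * r\<^sup>2)"

definition BMO :: "(complex \<Rightarrow> complex) set" where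
  "BMO = {\<phi>. locally_integrable \<phi> \<and> (\<exists>r>0. bdd_above (range (mean_osc \<phi> r)))}"

definition fock_norm :: "real \<Rightarrow> (complex \<Rightarrow> complex) \<Rightarrow> real" where
  "fock_norm \<alpha> f = (SUP z. cmod (f z) * exp (- \<alpha> * (cmod z)\<^sup>2 / 2))"

definition Fock_inf :: "real \<Rightarrow> (complex \<Rightarrow> complex) set" where
  "Fock_inf \<alpha> = {f. f holomorphic_on UNIV \<and>
      bdd_above (range (\<lambda>z. cmod (f z) * exp (- \<alpha> * (cmod z)\<^sup>2 / 2)))}"

definition fock_kernel :: "real \<Rightarrow> complex \<Rightarrow> complex \<Rightarrow> complex" where
  "fock_kernel \<alpha> z w = exp (complex_of_real \<alpha> * cnj z * w)"

definition gauss_density :: "real \<Rightarrow> complex \<Rightarrow> real" where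
  "gauss_density \<alpha> w = \<alpha> / pi * exp (- \<alpha> * (cmod w)\<^sup>2)"

definition toeplitz_integrand ::
  "real \<Rightarrow> (complex \<Rightarrow> complex) \<Rightarrow> (complex \<Rightarrow> complex) \<Rightarrow> complex \<Rightarrow> complex \<Rightarrow> complex" where
  "toeplitz_integrand \<alpha> \<phi> f z w =
     \<phi> w * f w * cnj (fock_kernel \<alpha> z w) * complex_of_real (gauss_density \<alpha> w)"

definition toeplitz :: "real \<Rightarrow> (complex \<Rightarrow> complex) \<Rightarrow> (complex \<Rightarrow> complex) \<Rightarrow> complex \<Rightarrow> complex" where
  "toeplitz \<alpha> \<phi> f z = (LINT w|lborel. toeplitz_integrand \<alpha> \<phi> f z w)"

definition tilde_integrand :: "real \<Rightarrow> (complex \<Rightarrow> complex) \<Rightarrow> real \<Rightarrow> complex \<Rightarrow> complex \<Rightarrow> real" where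
  "tilde_integrand \<alpha> \<phi> t z w = cmod (\<phi> w) * exp (- \<alpha> * t * (cmod (z - w))\<^sup>2 / 2)"

definition tilde_abs :: "real \<Rightarrow> (complex \<Rightarrow> complex) \<Rightarrow> real \<Rightarrow> complex \<Rightarrow> real" where
  "tilde_abs \<alpha> \<phi> t z = \<alpha> / pi * (LINT w|lborel. tilde_integrand \<alpha> \<phi> t z w)"

definition tilde_in_C0 :: "real \<Rightarrow> (complex \<Rightarrow> complex) \<Rightarrow> real \<Rightarrow> bool" where
  "tilde_in_C0 \<alpha> \<phi> t \<longleftrightarrow>
     (\<forall>z. integrable lborel (tilde_integrand \<alpha> \<phi> t z)) \<and>
     continuous_on UNIV (tilde_abs \<alpha> \<phi> t) \<and>
     (tilde_abs \<alpha> \<phi> t \<longlongrightarrow> 0) at_infinity"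

definition toeplitz_compact_on_Fock :: "real \<Rightarrow> (complex \<Rightarrow> complex) \<Rightarrow> bool" where
  "toeplitz_compact_on_Fock \<alpha> \<phi> \<longleftrightarrow>
     (\<forall>f\<in>Fock_inf \<alpha>. \<forall>z. integrable lborel (toeplitz_integrand \<alpha> \<phi> f z)) \<and>
     (\<forall>f\<in>Fock_inf \<alpha>. toeplitz \<alpha> \<phi> f \<in> Fock_inf \<alpha>) \<and>
     (\<forall>F::nat \<Rightarrow> complex \<Rightarrow> complex. (\<forall>n. F n \<in> Fock_inf \<alpha>) \<and> bdd_above (range (\<lambda>n. fock_norm \<alpha> (F n))) \<longrightarrow>
        (\<exists>(r::nat \<Rightarrow> nat) g. strict_mono r \<and> g \<in> Fock_inf \<alpha> \<and>
           (\<lambda>n. fock_norm \<alpha> (\<lambda>z. toeplitz \<alpha> \<phi> (F (r n)) z - g z)) \<longlonglongrightarrow> 0))"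

end

theory Submission
  imports Defs "HOL-Complex_Analysis.Complex_Analysis"
begin

text \<open>
  Completing the square gives
  \<open>|K_z(w)| e^{-\<alpha>|w|\<^sup>2} = e^{\<alpha>|z|\<^sup>2/2} e^{-\<alpha>|w|\<^sup>2/2} e^{-\<alpha>|z-w|\<^sup>2/2}\<close>, hence the pointwise bound
  \<open>|T\<^sub>\<phi> f(z)| e^{-\<alpha>|z|\<^sup>2/2} \<le> \<parallel>f\<parallel> |\<phi>|~\<^sub>1(z)\<close>. Together with holomorphy of \<open>T\<^sub>\<phi> f\<close>
  (differentiation under the integral sign) this shows that \<open>T\<^sub>\<phi>\<close> maps \<open>F\<^sup>\<infinity>\<^sub>\<alpha>\<close> into itself.
  A bounded sequence in \<open>F\<^sup>\<infinity>\<^sub>\<alpha>\<close> is a normal family, so by Montel's theorem a subsequence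
  converges pointwise to some \<open>g \<in> F\<^sup>\<infinity>\<^sub>\<alpha>\<close>. For the differences \<open>h\<^sub>n\<close> the weighted values of
  \<open>T\<^sub>\<phi> h\<^sub>n\<close> are uniformly small far out because \<open>|\<phi>|~\<^sub>1\<close> vanishes at infinity, and uniformly
  small on a fixed disc by dominated convergence: the estimate
  \<open>e^{-\<alpha>|z-w|\<^sup>2/2} \<le> e^{\<alpha>|z|\<^sup>2/2} e^{-\<alpha>|w|\<^sup>2/4}\<close> provides the majorant \<open>|\<phi>(w)| e^{-\<alpha>|w|\<^sup>2/4}\<close>,
  whose integrability is the finiteness of \<open>|\<phi>|~\<^sub>1\<^sub>/\<^sub>2(0)\<close>.
\<close>

abbreviation fock_weight :: "real \<Rightarrow> complex \<Rightarrow> real" where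
  "fock_weight \<alpha> z \<equiv> exp (- \<alpha> * (cmod z)\<^sup>2 / 2)"

lemma borel_measurable_locally_integrable:
  assumes "locally_integrable \<phi>"
  shows "\<phi> \<in> borel_measurable lborel"
proof (rule borel_measurable_LIMSEQ_metric)
  show "(\<lambda>x. indicator (cball 0 (real n)) x *\<^sub>R \<phi> x) \<in> borel_measurable lborel" for n
    using assms compact_cball[of 0 "real n"] unfolding locally_integrable_def set_integrable_def
    by (blast intro: borel_measurable_integrable)
  fix x :: complex
  obtain N :: nat where "cmod x \<le> real N" using real_arch_simple by blast
  then have "\<forall>n\<ge>N. indicator (cball 0 (real n)) x *\<^sub>R \<phi> x = \<phi> x" by auto
  then show "(\<lambda>n. indicator (cball 0 (real n)) x *\<^sub>R \<phi> x) \<longlonglongrightarrow> \<phi> x"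
    by (intro tendsto_eventually) (auto simp: eventually_sequentially)
qed

lemma bounded_range_if_vanishing_at_infinity:
  fixes g :: "'a::{real_normed_vector, heine_borel} \<Rightarrow> 'b::real_normed_vector"
  assumes "continuous_on UNIV g" and "(g \<longlongrightarrow> 0) at_infinity"
  shows "bounded (range g)"
proof -
  obtain b where b: "\<And>z. b \<le> norm z \<Longrightarrow> norm (g z) < 1"
    using tendstoD[OF assms(2), of 1] unfolding eventually_at_infinity by auto
  have "bounded (g ` cball 0 b)"
    using assms(1) by (intro compact_imp_bounded compact_continuous_image)
      (auto intro: continuous_on_subset)
  moreover have "range g \<subseteq> g ` cball 0 b \<union> ball 0 1"
    using b by (force simp: not_le)
  ultimately show ?thesis
    by (metis bounded_Un bounded_ball bounded_subset)
qed

lemma norm_exp_difference_quotient_le: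
  fixes c z z0 :: complex
  assumes "norm z \<le> R" "norm z0 \<le> R" "z \<noteq> z0"
  shows "norm ((exp (c * z) - exp (c * z0)) / (z - z0)) \<le> cmod c * exp (cmod c * R)"
proof -
  have "norm (exp (c * z) - exp (c * z0)) \<le> (cmod c * exp (cmod c * R)) * norm (z - z0)"
  proof (rule field_differentiable_bound[where S="cball 0 R" and f'="\<lambda>z. exp (c * z) * c"])
    show "((\<lambda>z. exp (c * z)) has_field_derivative exp (c * y) * c) (at y within cball 0 R)" for y
      by (auto intro!: derivative_eq_intros)
    show "norm (exp (c * y) * c) \<le> cmod c * exp (cmod c * R)" if "y \<in> cball 0 R" for y
    proof -
      have "norm (exp (c * y)) \<le> exp (norm (c * y))" by (rule norm_exp)
      also have "\<dots> \<le> exp (cmod c * R)"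
        using that by (auto simp: norm_mult intro!: mult_left_mono)
      finally show ?thesis by (simp add: norm_mult mult.commute mult_left_mono)
    qed
  qed (use assms in auto)
  then show ?thesis using assms(3) by (simp add: norm_divide divide_le_eq)
qed

lemma linear_exp_gaussian_le:
  fixes \<alpha> a x :: real
  assumes "\<alpha> > 0" and "x \<ge> 0"
  shows "x * exp (a * x) * exp (- \<alpha> * x\<^sup>2 / 2) \<le> exp ((a + 1)\<^sup>2 / \<alpha>) * exp (- \<alpha> * x\<^sup>2 / 4)"
proof -
  have "x * exp (a * x) * exp (- \<alpha> * x\<^sup>2 / 2) \<le> exp x * exp (a * x) * exp (- \<alpha> * x\<^sup>2 / 2)"
    using exp_ge_add_one_self[of x] by (intro mult_right_mono) (auto simp del: exp_ge_add_one_self)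
  also have "\<dots> = exp ((a + 1) * x - \<alpha> * x\<^sup>2 / 2)"
    by (simp add: exp_add[symmetric] exp_diff algebra_simps)
  also have "\<dots> \<le> exp ((a + 1)\<^sup>2 / \<alpha> - \<alpha> * x\<^sup>2 / 4)"
  proof -
    have "\<alpha> * ((a + 1) * x - \<alpha> * x\<^sup>2 / 4) \<le> (a + 1)\<^sup>2"
      using zero_le_power2[of "(a + 1) - \<alpha> * x / 2"] by (simp add: power2_eq_square algebra_simps)
    then show ?thesis using assms(1) by (simp add: field_simps)
  qed
  also have "\<dots> = exp ((a + 1)\<^sup>2 / \<alpha>) * exp (- \<alpha> * x\<^sup>2 / 4)"
    by (simp add: exp_add[symmetric])
  finally show ?thesis .
qed

lemma has_field_derivative_integral_exp:
  fixes A c :: "'a \<Rightarrow> complex"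
  assumes A: "A \<in> borel_measurable M" and c: "c \<in> borel_measurable M"
    and int: "\<And>z. integrable M (\<lambda>w. A w * exp (c w * z))"
    and dom: "\<And>R. integrable M (\<lambda>w. cmod (A w) * cmod (c w) * exp (cmod (c w) * R))"
  shows "((\<lambda>z. LINT w|M. A w * exp (c w * z)) has_field_derivative
           (LINT w|M. A w * (c w * exp (c w * z0)))) (at z0)"
  unfolding has_field_derivative_iff tendsto_at_iff_sequentially comp_def
proof (intro allI impI)
  fix X :: "nat \<Rightarrow> complex"
  assume X: "\<forall>i. X i \<in> UNIV - {z0}" and lim: "X \<longlonglongrightarrow> z0"
  obtain K where K: "\<And>i. norm (X i) \<le> K"
    using BseqE[OF convergent_imp_Bseq[OF convergentI[OF lim]]] by metis
  define R where "R = max K (cmod z0)"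
  define q where "q i w = (exp (c w * X i) - exp (c w * z0)) / (X i - z0)" for i w
  have "(\<lambda>i. ((LINT w|M. A w * exp (c w * X i)) - (LINT w|M. A w * exp (c w * z0))) / (X i - z0))
      = (\<lambda>i. LINT w|M. A w * q i w)"
    unfolding q_def times_divide_eq_right right_diff_distrib using int by simp
  also have "\<dots> \<longlonglongrightarrow> (LINT w|M. A w * (c w * exp (c w * z0)))"
  proof (rule integral_dominated_convergence[where w="\<lambda>w. cmod (A w) * cmod (c w) * exp (cmod (c w) * R)"])
    show "(\<lambda>w. A w * (c w * exp (c w * z0))) \<in> borel_measurable M"
      using A c by measurable
    show "(\<lambda>w. A w * q i w) \<in> borel_measurable M" for i
      unfolding q_def using A c by measurable
    show "AE w in M. (\<lambda>i. A w * q i w) \<longlonglongrightarrow> A w * (c w * exp (c w * z0))"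
    proof (intro AE_I2 tendsto_mult_left)
      fix w
      have "((\<lambda>y. exp (c w * y)) has_field_derivative c w * exp (c w * z0)) (at z0)"
        by (auto intro!: derivative_eq_intros)
      then have "((\<lambda>y. (exp (c w * y) - exp (c w * z0)) / (y - z0)) \<longlongrightarrow> c w * exp (c w * z0)) (at z0)"
        unfolding has_field_derivative_iff .
      then show "(\<lambda>i. q i w) \<longlonglongrightarrow> c w * exp (c w * z0)"
        unfolding q_def using X lim by (simp add: tendsto_at_iff_sequentially comp_def)
    qed
    show "AE w in M. norm (A w * q i w) \<le> cmod (A w) * cmod (c w) * exp (cmod (c w) * R)" for i
    proof (rule AE_I2)
      fix w
      have "norm (q i w) \<le> cmod (c w) * exp (cmod (c w) * R)"
        unfolding q_def R_def using X K[of i] by (intro norm_exp_difference_quotient_le) auto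
      then show "norm (A w * q i w) \<le> cmod (A w) * cmod (c w) * exp (cmod (c w) * R)"
        by (simp add: norm_mult mult.assoc mult_left_mono)
    qed
  qed (rule dom)
  finally show "(\<lambda>i. ((LINT w|M. A w * exp (c w * X i)) - (LINT w|M. A w * exp (c w * z0))) / (X i - z0))
      \<longlonglongrightarrow> (LINT w|M. A w * (c w * exp (c w * z0)))" .
qed

lemma Fock_infI:
  assumes "f holomorphic_on UNIV" and "\<And>z. cmod (f z) * fock_weight \<alpha> z \<le> B"
  shows "f \<in> Fock_inf \<alpha>"
  using assms(1) bdd_aboveI2[of UNIV "\<lambda>z. cmod (f z) * fock_weight \<alpha> z", OF assms(2)]
  unfolding Fock_inf_def by simp

lemma continuous_on_Fock_inf: "f \<in> Fock_inf \<alpha> \<Longrightarrow> continuous_on UNIV f"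
  unfolding Fock_inf_def by (auto intro: holomorphic_on_imp_continuous_on)

lemma borel_measurable_Fock_inf: "f \<in> Fock_inf \<alpha> \<Longrightarrow> f \<in> borel_measurable lborel"
  using borel_measurable_continuous_onI[OF continuous_on_Fock_inf] by simp

lemma weighted_le_fock_norm:
  "f \<in> Fock_inf \<alpha> \<Longrightarrow> cmod (f z) * fock_weight \<alpha> z \<le> fock_norm \<alpha> f"
  unfolding Fock_inf_def fock_norm_def by (auto intro: cSUP_upper)

lemma fock_norm_le:
  assumes "\<And>z. cmod (f z) * fock_weight \<alpha> z \<le> B"
  shows "fock_norm \<alpha> f \<le> B"
  unfolding fock_norm_def using assms by (intro cSUP_least) auto

lemma weighted_bound_nonneg:
  assumes "\<And>z. cmod (f z) * fock_weight \<alpha> z \<le> B"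
  shows "0 \<le> B"
  by (rule order_trans[OF mult_nonneg_nonneg[OF norm_ge_zero less_imp_le[OF exp_gt_zero]] assms])

lemma fock_norm_nonneg:
  assumes "\<And>z. cmod (f z) * fock_weight \<alpha> z \<le> B"
  shows "0 \<le> fock_norm \<alpha> f"
proof (rule weighted_bound_nonneg)
  show "cmod (f z) * fock_weight \<alpha> z \<le> fock_norm \<alpha> f" for z
    unfolding fock_norm_def using assms by (intro cSUP_upper bdd_aboveI2) auto
qed

lemma fock_norm_tendsto_zeroI:
  assumes "\<And>\<epsilon>. \<epsilon> > 0 \<Longrightarrow> \<forall>\<^sub>F n in F. \<forall>z. cmod (f n z) * fock_weight \<alpha> z \<le> \<epsilon>"
  shows "((\<lambda>n. fock_norm \<alpha> (f n)) \<longlongrightarrow> 0) F"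
proof (rule tendstoI)
  fix \<epsilon> :: real assume "\<epsilon> > 0"
  then have "\<forall>\<^sub>F n in F. \<forall>z. cmod (f n z) * fock_weight \<alpha> z \<le> \<epsilon> / 2"
    by (intro assms) simp
  then show "\<forall>\<^sub>F n in F. dist (fock_norm \<alpha> (f n)) 0 < \<epsilon>"
  proof eventually_elim
    case (elim n)
    then show ?case
      using fock_norm_le[of "f n"] fock_norm_nonneg[of "f n"] \<open>\<epsilon> > 0\<close> by fastforce
  qed
qed

lemma Fock_inf_bounded_seq_converging_subseq:
  fixes F :: "nat \<Rightarrow> complex \<Rightarrow> complex"
  assumes F: "\<And>n. F n \<in> Fock_inf \<alpha>" and B: "\<And>n z. cmod (F n z) * fock_weight \<alpha> z \<le> B"
  obtains r g where "strict_mono r" and "g \<in> Fock_inf \<alpha>"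
    and "\<And>z. cmod (g z) * fock_weight \<alpha> z \<le> B" and "\<And>z. (\<lambda>n. F (r n) z) \<longlonglongrightarrow> g z"
proof -
  have F_le: "cmod (F n z) \<le> B * exp (\<alpha> * (cmod z)\<^sup>2 / 2)" for n z
  proof -
    have "cmod (F n z) = cmod (F n z) * fock_weight \<alpha> z * exp (\<alpha> * (cmod z)\<^sup>2 / 2)"
      by (simp add: mult.assoc mult_exp_exp)
    also have "\<dots> \<le> B * exp (\<alpha> * (cmod z)\<^sup>2 / 2)" by (intro mult_right_mono B) auto
    finally show ?thesis .
  qed
  obtain g r where g: "g holomorphic_on UNIV" and r: "strict_mono r"
    and lim: "\<And>z. (\<lambda>n. F (r n) z) \<longlonglongrightarrow> g z"
  proof (rule Montel[of UNIV "range F" F])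
    show "h holomorphic_on UNIV" if "h \<in> range F" for h
      using that F unfolding Fock_inf_def by auto
    show "\<exists>M. \<forall>h\<in>range F. \<forall>z\<in>K. cmod (h z) \<le> M" if "compact K" for K
    proof -
      have "bounded ((\<lambda>z. B * exp (\<alpha> * (cmod z)\<^sup>2 / 2)) ` K)"
        using \<open>compact K\<close> by (intro compact_imp_bounded compact_continuous_image continuous_intros) auto
      then obtain M where M: "\<And>z. z \<in> K \<Longrightarrow> \<bar>B * exp (\<alpha> * (cmod z)\<^sup>2 / 2)\<bar> \<le> M"
        unfolding bounded_iff by auto
      have "cmod (F n z) \<le> M" if "z \<in> K" for n z
        using F_le[of n z] abs_le_D1[OF M[OF that]] by linarith
      then show ?thesis by blast
    qed
  qed auto
  have g_le: "cmod (g z) * fock_weight \<alpha> z \<le> B" for z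
    using lim[of z] B by (intro LIMSEQ_le_const2[where X="\<lambda>n. cmod (F (r n) z) * fock_weight \<alpha> z"])
      (auto intro!: tendsto_intros)
  show ?thesis
    using that[OF r Fock_infI[OF g g_le] g_le lim] .
qed

lemma toeplitz_integrand_eq_exp:
  "toeplitz_integrand \<alpha> \<phi> h z w =
     \<phi> w * h w * complex_of_real (gauss_density \<alpha> w) * exp (complex_of_real \<alpha> * cnj w * z)"
  unfolding toeplitz_integrand_def fock_kernel_def by (simp add: exp_cnj algebra_simps)

lemma borel_measurable_cnj [measurable]: "cnj \<in> borel_measurable borel"
  by (intro borel_measurable_continuous_onI continuous_on_cnj continuous_on_id)

lemma borel_measurable_toeplitz_integrand [measurable]:
  assumes [measurable]: "\<phi> \<in> borel_measurable lborel" "h \<in> borel_measurable lborel"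
  shows "toeplitz_integrand \<alpha> \<phi> h z \<in> borel_measurable lborel"
  unfolding toeplitz_integrand_eq_exp gauss_density_def by measurable

lemma norm_toeplitz_integrand:
  assumes "\<alpha> \<ge> 0"
  shows "norm (toeplitz_integrand \<alpha> \<phi> h z w) =
     \<alpha> / pi * exp (\<alpha> * (cmod z)\<^sup>2 / 2) * (cmod (h w) * fock_weight \<alpha> w) * tilde_integrand \<alpha> \<phi> 1 z w"
proof -
  have polar: "Re (z * cnj w) = ((cmod z)\<^sup>2 + (cmod w)\<^sup>2 - (cmod (z - w))\<^sup>2) / 2"
    unfolding cmod_power2 by (simp add: power2_eq_square algebra_simps)
  have kernel: "cmod (cnj (fock_kernel \<alpha> z w)) = exp (\<alpha> * Re (z * cnj w))"
    unfolding fock_kernel_def by (simp add: exp_cnj algebra_simps)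
  have density: "cmod (complex_of_real (gauss_density \<alpha> w)) = \<alpha> / pi * exp (- \<alpha> * (cmod w)\<^sup>2)"
    unfolding norm_of_real gauss_density_def using assms by simp
  have "exp (\<alpha> * Re (z * cnj w)) * exp (- \<alpha> * (cmod w)\<^sup>2) =
      exp (\<alpha> * (cmod z)\<^sup>2 / 2) * fock_weight \<alpha> w * exp (- \<alpha> * (cmod (z - w))\<^sup>2 / 2)"
    unfolding polar by (simp add: exp_add[symmetric] field_simps)
  then show ?thesis
    unfolding toeplitz_integrand_def tilde_integrand_def norm_mult kernel density
    by (simp add: algebra_simps)
qed

lemma gaussian_shift_le:
  assumes "\<alpha> \<ge> 0"
  shows "exp (- \<alpha> * (cmod (z - w))\<^sup>2 / 2) \<le> exp (\<alpha> * (cmod z)\<^sup>2 / 2) * exp (- \<alpha> * (cmod w)\<^sup>2 / 4)"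
proof -
  have "cmod w \<le> cmod z + cmod (z - w)"
    using norm_triangle_sub[of w z] by (simp add: norm_minus_commute)
  then have "(cmod w)\<^sup>2 \<le> (cmod z + cmod (z - w))\<^sup>2"
    by (intro power_mono) auto
  also have "\<dots> \<le> 2 * (cmod z)\<^sup>2 + 2 * (cmod (z - w))\<^sup>2"
    using zero_le_power2[of "cmod z - cmod (z - w)"] by (simp add: power2_eq_square algebra_simps)
  finally have "- \<alpha> * (cmod (z - w))\<^sup>2 / 2 \<le> \<alpha> * (cmod z)\<^sup>2 / 2 + - \<alpha> * (cmod w)\<^sup>2 / 4"
    using mult_left_mono[OF _ assms] by (fastforce simp: algebra_simps)
  then show ?thesis by (simp add: exp_add[symmetric])
qed

lemma tilde_integrand_le_centered:
  assumes "\<alpha> \<ge> 0"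
  shows "tilde_integrand \<alpha> \<phi> 1 z w \<le> exp (\<alpha> * (cmod z)\<^sup>2 / 2) * tilde_integrand \<alpha> \<phi> (1/2) 0 w"
  using mult_left_mono[OF gaussian_shift_le[OF assms, of z w] norm_ge_zero[of "\<phi> w"]]
  unfolding tilde_integrand_def by (simp add: algebra_simps)

text \<open>
  These are the only consequences of the hypotheses of the theorem that are used: the BMO
  condition enters only through measurability of \<open>\<phi>\<close>, and of the family \<open>|\<phi>|~\<^sub>t\<close> only
  \<open>t = 1\<close> and the value of \<open>|\<phi>|~\<^sub>1\<^sub>/\<^sub>2\<close> at the origin are needed.
\<close>
locale gaussian_toeplitz =
  fixes \<alpha> :: real and \<phi> :: "complex \<Rightarrow> complex"
  assumes alpha_pos: "\<alpha> > 0"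
    and symbol_measurable [measurable]: "\<phi> \<in> borel_measurable lborel"
    and tilde_C0: "tilde_in_C0 \<alpha> \<phi> 1"
    and integrable_tilde_half: "integrable lborel (tilde_integrand \<alpha> \<phi> (1/2) 0)"
begin

lemma integrable_tilde_one: "integrable lborel (tilde_integrand \<alpha> \<phi> 1 z)"
  using tilde_C0 unfolding tilde_in_C0_def by blast

lemma tilde_abs_bounded: obtains S where "\<And>z. tilde_abs \<alpha> \<phi> 1 z \<le> S"
proof -
  have "bounded (range (tilde_abs \<alpha> \<phi> 1))"
    using tilde_C0 unfolding tilde_in_C0_def by (intro bounded_range_if_vanishing_at_infinity) auto
  then show ?thesis
    using that unfolding bounded_iff by (auto intro: abs_le_D1)
qed

context
  fixes h :: "complex \<Rightarrow> complex" and B :: real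
  assumes h_measurable [measurable]: "h \<in> borel_measurable lborel"
    and h_bound: "\<And>w. cmod (h w) * fock_weight \<alpha> w \<le> B"
begin

lemma norm_toeplitz_integrand_le:
  "norm (toeplitz_integrand \<alpha> \<phi> h z w) \<le> B * (\<alpha> / pi * exp (\<alpha> * (cmod z)\<^sup>2 / 2) * tilde_integrand \<alpha> \<phi> 1 z w)"
proof -
  have "norm (toeplitz_integrand \<alpha> \<phi> h z w) =
      (cmod (h w) * fock_weight \<alpha> w) * (\<alpha> / pi * exp (\<alpha> * (cmod z)\<^sup>2 / 2) * tilde_integrand \<alpha> \<phi> 1 z w)"
    unfolding norm_toeplitz_integrand[OF less_imp_le[OF alpha_pos]] by (simp only: mult_ac)
  also have "\<dots> \<le> B * (\<alpha> / pi * exp (\<alpha> * (cmod z)\<^sup>2 / 2) * tilde_integrand \<alpha> \<phi> 1 z w)"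
    using h_bound alpha_pos by (intro mult_right_mono) (auto simp: tilde_integrand_def)
  finally show ?thesis .
qed

lemma integrable_toeplitz_integrand: "integrable lborel (toeplitz_integrand \<alpha> \<phi> h z)"
proof (rule Bochner_Integration.integrable_bound)
  show "integrable lborel (\<lambda>w. B * (\<alpha> / pi * exp (\<alpha> * (cmod z)\<^sup>2 / 2) * tilde_integrand \<alpha> \<phi> 1 z w))"
    using integrable_tilde_one by simp
  show "AE w in lborel. norm (toeplitz_integrand \<alpha> \<phi> h z w)
      \<le> norm (B * (\<alpha> / pi * exp (\<alpha> * (cmod z)\<^sup>2 / 2) * tilde_integrand \<alpha> \<phi> 1 z w))"
    using norm_toeplitz_integrand_le by (intro AE_I2) (metis abs_ge_self order_trans real_norm_def)
qed measurable

lemma toeplitz_weighted_le: "cmod (toeplitz \<alpha> \<phi> h z) * fock_weight \<alpha> z \<le> B * tilde_abs \<alpha> \<phi> 1 z"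
proof -
  have "cmod (toeplitz \<alpha> \<phi> h z) \<le>
      (LINT w|lborel. B * (\<alpha> / pi * exp (\<alpha> * (cmod z)\<^sup>2 / 2) * tilde_integrand \<alpha> \<phi> 1 z w))"
    unfolding toeplitz_def using integrable_toeplitz_integrand integrable_tilde_one norm_toeplitz_integrand_le
    by (intro Bochner_Integration.integral_norm_bound_integral) auto
  also have "\<dots> = B * tilde_abs \<alpha> \<phi> 1 z * exp (\<alpha> * (cmod z)\<^sup>2 / 2)"
    unfolding tilde_abs_def by (simp add: algebra_simps)
  finally have "cmod (toeplitz \<alpha> \<phi> h z) * fock_weight \<alpha> z \<le>
      B * tilde_abs \<alpha> \<phi> 1 z * (exp (\<alpha> * (cmod z)\<^sup>2 / 2) * fock_weight \<alpha> z)"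
    by (simp add: mult_right_mono mult.assoc[symmetric])
  then show ?thesis by (simp add: mult_exp_exp)
qed

lemma integrable_weighted_tilde_half:
  "integrable lborel (\<lambda>w. cmod (h w) * fock_weight \<alpha> w * tilde_integrand \<alpha> \<phi> (1/2) 0 w)"
proof (rule Bochner_Integration.integrable_bound)
  show "integrable lborel (\<lambda>w. B * tilde_integrand \<alpha> \<phi> (1/2) 0 w)"
    using integrable_tilde_half by simp
  show "AE w in lborel. norm (cmod (h w) * fock_weight \<alpha> w * tilde_integrand \<alpha> \<phi> (1/2) 0 w)
      \<le> norm (B * tilde_integrand \<alpha> \<phi> (1/2) 0 w)"
    using order_trans[OF h_bound abs_ge_self]
    by (intro AE_I2) (auto simp: tilde_integrand_def abs_mult intro!: mult_right_mono)
qed (unfold tilde_integrand_def, measurable)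

lemma toeplitz_weighted_le_local:
  "cmod (toeplitz \<alpha> \<phi> h z) * fock_weight \<alpha> z \<le>
     \<alpha> / pi * exp (\<alpha> * (cmod z)\<^sup>2 / 2) *
     (LINT w|lborel. cmod (h w) * fock_weight \<alpha> w * tilde_integrand \<alpha> \<phi> (1/2) 0 w)"
proof -
  define C where "C = \<alpha> / pi * exp (\<alpha> * (cmod z)\<^sup>2 / 2)"
  have C: "0 \<le> C" unfolding C_def using alpha_pos by simp
  have "norm (toeplitz_integrand \<alpha> \<phi> h z w) \<le>
      C * exp (\<alpha> * (cmod z)\<^sup>2 / 2) * (cmod (h w) * fock_weight \<alpha> w * tilde_integrand \<alpha> \<phi> (1/2) 0 w)" for w
  proof -
    have "norm (toeplitz_integrand \<alpha> \<phi> h z w) = C * (cmod (h w) * fock_weight \<alpha> w) * tilde_integrand \<alpha> \<phi> 1 z w"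
      unfolding C_def by (rule norm_toeplitz_integrand) (use alpha_pos in simp)
    also have "\<dots> \<le> C * (cmod (h w) * fock_weight \<alpha> w) * (exp (\<alpha> * (cmod z)\<^sup>2 / 2) * tilde_integrand \<alpha> \<phi> (1/2) 0 w)"
      using C alpha_pos by (intro mult_left_mono tilde_integrand_le_centered) auto
    finally show ?thesis by (simp only: mult_ac)
  qed
  then have "cmod (toeplitz \<alpha> \<phi> h z) \<le>
      C * exp (\<alpha> * (cmod z)\<^sup>2 / 2) * (LINT w|lborel. cmod (h w) * fock_weight \<alpha> w * tilde_integrand \<alpha> \<phi> (1/2) 0 w)"
    unfolding toeplitz_def using integrable_toeplitz_integrand integrable_weighted_tilde_half
    by (subst integral_mult_right_zero[symmetric]) (intro Bochner_Integration.integral_norm_bound_integral; simp)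
  then have "cmod (toeplitz \<alpha> \<phi> h z) * fock_weight \<alpha> z \<le>
      C * (LINT w|lborel. cmod (h w) * fock_weight \<alpha> w * tilde_integrand \<alpha> \<phi> (1/2) 0 w) *
      (exp (\<alpha> * (cmod z)\<^sup>2 / 2) * fock_weight \<alpha> z)"
    by (simp add: mult_right_mono mult_ac)
  then show ?thesis unfolding C_def by (simp add: mult_exp_exp)
qed

lemma integrable_toeplitz_derivative_majorant:
  "integrable lborel (\<lambda>w. cmod (\<phi> w * h w * complex_of_real (gauss_density \<alpha> w)) *
     cmod (complex_of_real \<alpha> * cnj w) * exp (cmod (complex_of_real \<alpha> * cnj w) * R))"
    (is "integrable lborel ?g")
proof (rule Bochner_Integration.integrable_bound)
  define K where "K = B * (\<alpha> * \<alpha> / pi) * exp ((\<alpha> * R + 1)\<^sup>2 / \<alpha>)"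
  show "integrable lborel (\<lambda>w. K * tilde_integrand \<alpha> \<phi> (1/2) 0 w)"
    using integrable_tilde_half by simp
  have bound: "?g w \<le> K * tilde_integrand \<alpha> \<phi> (1/2) 0 w" for w
  proof -
    \<comment> \<open>one half of the Gaussian \<open>e^{-\<alpha>|w|\<^sup>2}\<close> is absorbed by \<open>h\<close>, the other
      by the growth \<open>|w| e^{\<alpha>R|w|}\<close> of the derivative of the kernel\<close>
    have "?g w = \<alpha> * \<alpha> / pi * cmod (\<phi> w) *
        ((cmod (h w) * fock_weight \<alpha> w) * (cmod w * exp ((\<alpha> * R) * cmod w) * fock_weight \<alpha> w))"
      using alpha_pos unfolding norm_mult norm_of_real gauss_density_def
      by (simp add: mult_exp_exp[of "- (\<alpha> * (cmod w)\<^sup>2 / 2)", simplified] algebra_simps)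
    also have "\<dots> \<le> \<alpha> * \<alpha> / pi * cmod (\<phi> w) * (B * (exp ((\<alpha> * R + 1)\<^sup>2 / \<alpha>) * exp (- \<alpha> * (cmod w)\<^sup>2 / 4)))"
      using alpha_pos weighted_bound_nonneg[OF h_bound]
      by (intro mult_left_mono mult_mono[OF h_bound linear_exp_gaussian_le[OF alpha_pos norm_ge_zero]]) auto
    also have "\<dots> = K * tilde_integrand \<alpha> \<phi> (1/2) 0 w"
      unfolding K_def tilde_integrand_def by (simp add: algebra_simps)
    finally show ?thesis .
  qed
  show "AE w in lborel. norm (?g w) \<le> norm (K * tilde_integrand \<alpha> \<phi> (1/2) 0 w)"
    using order_trans[OF bound abs_ge_self] by (intro AE_I2) (simp add: abs_mult)
qed (unfold gauss_density_def, measurable)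

lemma toeplitz_holomorphic: "toeplitz \<alpha> \<phi> h holomorphic_on UNIV"
proof -
  define A where "A w = \<phi> w * h w * complex_of_real (gauss_density \<alpha> w)" for w
  define c where "c w = complex_of_real \<alpha> * cnj w" for w
  have [measurable]: "c \<in> borel_measurable lborel"
    unfolding c_def[abs_def] by measurable
  have [measurable]: "A \<in> borel_measurable lborel"
    unfolding A_def[abs_def] gauss_density_def by measurable
  have T: "toeplitz \<alpha> \<phi> h z = (LINT w|lborel. A w * exp (c w * z))" for z
    unfolding toeplitz_def toeplitz_integrand_eq_exp A_def c_def ..
  have dom: "integrable lborel (\<lambda>w. cmod (A w) * cmod (c w) * exp (cmod (c w) * R))" for R
    unfolding A_def c_def by (rule integrable_toeplitz_derivative_majorant)
  have "(toeplitz \<alpha> \<phi> h has_field_derivative (LINT w|lborel. A w * (c w * exp (c w * z)))) (at z)" for z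
    unfolding T[abs_def]
  proof (rule has_field_derivative_integral_exp[OF _ _ _ dom])
    show "integrable lborel (\<lambda>w. A w * exp (c w * z))" for z
      using integrable_toeplitz_integrand[of z] unfolding toeplitz_integrand_eq_exp A_def c_def .
  qed measurable
  then show ?thesis
    by (auto simp: holomorphic_on_def field_differentiable_def field_differentiable_at_within)
qed

end

lemma toeplitz_in_Fock_inf:
  assumes f: "f \<in> Fock_inf \<alpha>"
  shows "toeplitz \<alpha> \<phi> f \<in> Fock_inf \<alpha>"
proof -
  note f_bound = borel_measurable_Fock_inf[OF f] weighted_le_fock_norm[OF f]
  obtain S where S: "\<And>z. tilde_abs \<alpha> \<phi> 1 z \<le> S" using tilde_abs_bounded by blast
  have "cmod (toeplitz \<alpha> \<phi> f z) * fock_weight \<alpha> z \<le> fock_norm \<alpha> f * S" for z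
    using toeplitz_weighted_le[OF f_bound, of z] S[of z] weighted_bound_nonneg[OF weighted_le_fock_norm[OF f]]
    by (meson mult_left_mono order_trans)
  then show ?thesis by (rule Fock_infI[OF toeplitz_holomorphic[OF f_bound]])
qed

lemma toeplitz_diff:
  assumes "f \<in> Fock_inf \<alpha>" and "g \<in> Fock_inf \<alpha>"
  shows "toeplitz \<alpha> \<phi> (\<lambda>w. f w - g w) z = toeplitz \<alpha> \<phi> f z - toeplitz \<alpha> \<phi> g z"
proof -
  have "toeplitz \<alpha> \<phi> (\<lambda>w. f w - g w) z =
      (LINT w|lborel. toeplitz_integrand \<alpha> \<phi> f z w - toeplitz_integrand \<alpha> \<phi> g z w)"
    unfolding toeplitz_def toeplitz_integrand_def by (simp add: algebra_simps)
  also have "\<dots> = toeplitz \<alpha> \<phi> f z - toeplitz \<alpha> \<phi> g z"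
    unfolding toeplitz_def using assms
    by (intro Bochner_Integration.integral_diff integrable_toeplitz_integrand[OF borel_measurable_Fock_inf weighted_le_fock_norm])
  finally show ?thesis .
qed

lemma weighted_tilde_half_integral_tendsto_zero:
  fixes h :: "nat \<Rightarrow> complex \<Rightarrow> complex"
  assumes h_measurable: "\<And>n. h n \<in> borel_measurable lborel"
    and h_bound: "\<And>n w. cmod (h n w) * fock_weight \<alpha> w \<le> B"
    and h_lim: "\<And>w. (\<lambda>n. h n w) \<longlonglongrightarrow> 0"
  shows "(\<lambda>n. LINT w|lborel. cmod (h n w) * fock_weight \<alpha> w * tilde_integrand \<alpha> \<phi> (1/2) 0 w) \<longlonglongrightarrow> 0"
proof -
  have "(\<lambda>n. LINT w|lborel. cmod (h n w) * fock_weight \<alpha> w * tilde_integrand \<alpha> \<phi> (1/2) 0 w)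
      \<longlonglongrightarrow> (LINT (w::complex)|lborel. 0)"
  proof (rule integral_dominated_convergence[where w="\<lambda>w. B * tilde_integrand \<alpha> \<phi> (1/2) 0 w"
        and s="\<lambda>n w. cmod (h n w) * fock_weight \<alpha> w * tilde_integrand \<alpha> \<phi> (1/2) 0 w" and f="\<lambda>w. 0"])
    show "integrable lborel (\<lambda>w. B * tilde_integrand \<alpha> \<phi> (1/2) 0 w)"
      using integrable_tilde_half by simp
    show "AE w in lborel. (\<lambda>n. cmod (h n w) * fock_weight \<alpha> w * tilde_integrand \<alpha> \<phi> (1/2) 0 w) \<longlonglongrightarrow> 0"
      using h_lim by (intro AE_I2) (auto intro!: tendsto_mult_left_zero tendsto_norm_zero)
    show "AE w in lborel. norm (cmod (h n w) * fock_weight \<alpha> w * tilde_integrand \<alpha> \<phi> (1/2) 0 w)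
        \<le> B * tilde_integrand \<alpha> \<phi> (1/2) 0 w" for n
      using h_bound by (intro AE_I2) (auto simp: tilde_integrand_def abs_mult intro!: mult_right_mono)
  qed (use h_measurable in \<open>unfold tilde_integrand_def, measurable\<close>)+
  then show ?thesis by simp
qed

lemma fock_norm_toeplitz_tendsto_zero:
  fixes h :: "nat \<Rightarrow> complex \<Rightarrow> complex"
  assumes h_measurable: "\<And>n. h n \<in> borel_measurable lborel"
    and h_bound: "\<And>n w. cmod (h n w) * fock_weight \<alpha> w \<le> B"
    and h_lim: "\<And>w. (\<lambda>n. h n w) \<longlonglongrightarrow> 0"
  shows "(\<lambda>n. fock_norm \<alpha> (toeplitz \<alpha> \<phi> (h n))) \<longlonglongrightarrow> 0"
proof (rule fock_norm_tendsto_zeroI)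
  define I where
    "I n = (LINT w|lborel. cmod (h n w) * fock_weight \<alpha> w * tilde_integrand \<alpha> \<phi> (1/2) 0 w)" for n
  have I_nonneg: "0 \<le> I n" for n
    unfolding I_def tilde_integrand_def by (intro integral_nonneg_AE AE_I2) simp
  have I_lim: "I \<longlonglongrightarrow> 0"
    unfolding I_def[abs_def] using h_measurable h_bound h_lim by (rule weighted_tilde_half_integral_tendsto_zero)
  fix \<epsilon> :: real assume "\<epsilon> > 0"
  have B: "0 \<le> B" using weighted_bound_nonneg[OF h_bound] .
  have "\<forall>\<^sub>F z in at_infinity. dist (tilde_abs \<alpha> \<phi> 1 z) 0 < \<epsilon> / (B + 1)"
    using tilde_C0 \<open>\<epsilon> > 0\<close> B unfolding tilde_in_C0_def by (intro tendstoD) auto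
  then obtain R where R: "\<And>z. R \<le> cmod z \<Longrightarrow> \<bar>tilde_abs \<alpha> \<phi> 1 z\<bar> < \<epsilon> / (B + 1)"
    unfolding eventually_at_infinity by auto
  define C where "C = \<alpha> / pi * exp (\<alpha> * R\<^sup>2 / 2)"
  have "(\<lambda>n. C * I n) \<longlonglongrightarrow> 0" using I_lim by (rule tendsto_mult_right_zero)
  then have "\<forall>\<^sub>F n in sequentially. C * I n < \<epsilon>" using \<open>\<epsilon> > 0\<close> by (rule order_tendstoD)
  then show "\<forall>\<^sub>F n in sequentially. \<forall>z. cmod (toeplitz \<alpha> \<phi> (h n) z) * fock_weight \<alpha> z \<le> \<epsilon>"
  proof (elim eventually_mono, intro allI)
    fix n z assume small: "C * I n < \<epsilon>"
    note toeplitz_bounds = toeplitz_weighted_le[OF h_measurable h_bound]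
      toeplitz_weighted_le_local[OF h_measurable h_bound]
    show "cmod (toeplitz \<alpha> \<phi> (h n) z) * fock_weight \<alpha> z \<le> \<epsilon>"
    proof (cases "R \<le> cmod z")
      case True
      have "B * tilde_abs \<alpha> \<phi> 1 z \<le> B * (\<epsilon> / (B + 1))"
        using R[OF True] B by (intro mult_left_mono) auto
      also have "\<dots> \<le> \<epsilon>" using B \<open>\<epsilon> > 0\<close> by (simp add: field_simps)
      finally show ?thesis using toeplitz_bounds(1)[of n z] by linarith
    next
      case False
      then have "exp (\<alpha> * (cmod z)\<^sup>2 / 2) \<le> exp (\<alpha> * R\<^sup>2 / 2)"
        using alpha_pos by (simp add: power_mono)
      then have "\<alpha> / pi * exp (\<alpha> * (cmod z)\<^sup>2 / 2) * I n \<le> C * I n"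
        unfolding C_def using alpha_pos I_nonneg[of n] by (intro mult_right_mono mult_left_mono) simp_all
      then show ?thesis using toeplitz_bounds(2)[of n z] small unfolding I_def by linarith
    qed
  qed
qed

lemma toeplitz_compact_on_Fock: "toeplitz_compact_on_Fock \<alpha> \<phi>"
  unfolding toeplitz_compact_on_Fock_def
proof (intro conjI ballI allI impI)
  fix f z assume f: "f \<in> Fock_inf \<alpha>"
  show "integrable lborel (toeplitz_integrand \<alpha> \<phi> f z)"
    using integrable_toeplitz_integrand[OF borel_measurable_Fock_inf[OF f] weighted_le_fock_norm[OF f]] .
  show "toeplitz \<alpha> \<phi> f \<in> Fock_inf \<alpha>"
    using toeplitz_in_Fock_inf[OF f] .
next
  fix F :: "nat \<Rightarrow> complex \<Rightarrow> complex"
  assume "(\<forall>n. F n \<in> Fock_inf \<alpha>) \<and> bdd_above (range (\<lambda>n. fock_norm \<alpha> (F n)))"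
  then obtain B where F: "\<And>n. F n \<in> Fock_inf \<alpha>" and B: "\<And>n. fock_norm \<alpha> (F n) \<le> B"
    by (auto simp: bdd_above_def)
  have F_bound: "cmod (F n z) * fock_weight \<alpha> z \<le> B" for n z
    by (rule order_trans[OF weighted_le_fock_norm[OF F] B])
  obtain r g where r: "strict_mono r" and g: "g \<in> Fock_inf \<alpha>"
    and g_bound: "\<And>z. cmod (g z) * fock_weight \<alpha> z \<le> B" and lim: "\<And>z. (\<lambda>n. F (r n) z) \<longlonglongrightarrow> g z"
    using Fock_inf_bounded_seq_converging_subseq[of F, OF F F_bound] by blast
  define h where "h n = (\<lambda>w. F (r n) w - g w)" for n
  have "(\<lambda>n. fock_norm \<alpha> (toeplitz \<alpha> \<phi> (h n))) \<longlonglongrightarrow> 0"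
  proof (rule fock_norm_toeplitz_tendsto_zero)
    show "h n \<in> borel_measurable lborel" for n
      unfolding h_def using borel_measurable_Fock_inf[OF F] borel_measurable_Fock_inf[OF g] by measurable
    show "cmod (h n w) * fock_weight \<alpha> w \<le> 2 * B" for n w
    proof -
      have "cmod (h n w) * fock_weight \<alpha> w \<le> (cmod (F (r n) w) + cmod (g w)) * fock_weight \<alpha> w"
        unfolding h_def by (intro mult_right_mono norm_triangle_ineq4) auto
      then show ?thesis using F_bound[of "r n" w] g_bound[of w] by (simp add: algebra_simps)
    qed
    show "(\<lambda>n. h n w) \<longlonglongrightarrow> 0" for w
      unfolding h_def using tendsto_diff[OF lim[of w] tendsto_const[of "g w"]] by simp
  qed
  moreover have "toeplitz \<alpha> \<phi> (h n) = (\<lambda>z. toeplitz \<alpha> \<phi> (F (r n)) z - toeplitz \<alpha> \<phi> g z)" for n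
    unfolding h_def by (rule ext) (rule toeplitz_diff[OF F g])
  ultimately show "\<exists>r g. strict_mono r \<and> g \<in> Fock_inf \<alpha> \<and>
      (\<lambda>n. fock_norm \<alpha> (\<lambda>z. toeplitz \<alpha> \<phi> (F (r n)) z - g z)) \<longlonglongrightarrow> 0"
    using r toeplitz_in_Fock_inf[OF g] by (intro exI[of _ r] exI[of _ "toeplitz \<alpha> \<phi> g"]) simp
qed

end

theorem theorem4p7:
  fixes \<alpha> :: real and \<phi> :: "complex \<Rightarrow> complex"
  assumes "\<alpha> > 0"
    and "\<phi> \<in> BMO"
    and "\<forall>t>0. tilde_in_C0 \<alpha> \<phi> t"
  shows "toeplitz_compact_on_Fock \<alpha> \<phi>"
proof -
  interpret gaussian_toeplitz \<alpha> \<phi>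
  proof
    show "\<alpha> > 0" by fact
    show "\<phi> \<in> borel_measurable lborel"
      using \<open>\<phi> \<in> BMO\<close> unfolding BMO_def by (blast intro: borel_measurable_locally_integrable)
    show "integrable lborel (tilde_integrand \<alpha> \<phi> (1/2) 0)"
      using assms(3) unfolding tilde_in_C0_def by simp
    show "tilde_in_C0 \<alpha> \<phi> 1"
      by (rule assms(3)[rule_format]) simp
  qed
  show ?thesis by (rule toeplitz_compact_on_Fock)
qed

end
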